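(* For estimating $H_M(\underline\theta)$ under squared error loss: (i) $d_{\psi(\alpha)}(X_1,X_2)=\ln Z_1-\psi(\alpha)$ is admissible within $\mathcal M_1$, while $d_{\ln\alpha}(X_1,X_2)=\ln Z_1-\ln\alpha$ and $d_{\ln(\alpha+1)}(X_1,X_2)=\ln Z_1-\ln(\alpha+1)$ are inadmissible and are dominated by $d_{\psi(\alpha)}$. (ii) Let $\beta_1(\alpha)=\psi^{-1}(c_3(\alpha))-\alpha$. (a) The generalized Bayes estimators $d_{\psi(\alpha+\beta)}(X_1,X_2)=\ln Z_1-\psi(\alpha+\beta)$ with $\beta_1(\alpha)\le\beta\le0$ are admissible within $\mathcal M_1$. (b) For $\beta\in(-\alpha,\beta_1(\alpha))\cup(0,\infty)$, $d_{\psi(\alpha+\beta)}$ is inadmissible; for $\beta\in(-\alpha,\beta_1(\alpha))$ it is dominated by $d_{c_3(\alpha)}(X_1,X_2)=\ln Z_1-c_3(\alpha)$, and for $\beta>0$ it is dominated by $d_{\psi(\alpha)}$.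
   Context: Fix a known $\alpha>0$. $X_1,X_2$ are independent, $X_i$ having density $f(x\mid\theta_i)=\frac{x^{\alpha-1}e^{-x/\theta_i}}{\Gamma(\alpha)\theta_i^{\alpha}}$, $x>0$, with unknown $\underline\theta=(\theta_1,\theta_2)\in\Theta=(0,\infty)^2$. $Z_1=\min\{X_1,X_2\}$, $Z_2=\max\{X_1,X_2\}$. $H_M(\underline\theta)=\ln\theta_1\, I(X_1\le X_2)+\ln\theta_2\, I(X_1>X_2)$. $\psi$ is the digamma function (strictly increasing, inverse $\psi^{-1}$); $G_\alpha,g_\alpha$ are the distribution function and density of the gamma distribution with shape $\alpha$, scale $1$; $c_3(\alpha)=2\int_0^\infty\ln(z)[1-G_\alpha(z)]g_\alpha(z)\,dz$. For $c\in\mathbb R$, $d_c(X_1,X_2)=\ln Z_1-c$ and $\mathcal M_1=\{d_c:c\in\mathbb R\}$. Risk: $R(\underline\theta,d)=\mathbb E_{\underline\theta}(d(X_1,X_2)-H_M(\underline\theta))^2$. $d'$ dominates $d$ if its risk is $\le$ for all $\underline\theta$ and $<$ for some; $d$ is inadmissible if some estimator dominates it; $d\in\mathcal M_1$ is admissible within $\mathcal M_1$ if no member of $\mathcal M_1$ dominates it. *)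

theory Defs
  imports "HOL-Analysis.Analysis"
begin

definition gamma_dens :: "real \<Rightarrow> real \<Rightarrow> real \<Rightarrow> real" where
  "gamma_dens a th x =
     (if x > 0 then x powr (a - 1) * exp (- x / th) / (Gamma a * th powr a) else 0)"

definition g_std :: "real \<Rightarrow> real \<Rightarrow> real" where
  "g_std a z = gamma_dens a 1 z"

definition G_std :: "real \<Rightarrow> real \<Rightarrow> real" where
  "G_std a z = (LBINT t:{0..z}. g_std a t)"

definition c3 :: "real \<Rightarrow> real" where
  "c3 a = 2 * (LBINT z:{0<..}. ln z * (1 - G_std a z) * g_std a z)"

definition Digamma_inv :: "real \<Rightarrow> real" where
  "Digamma_inv c = (THE x. x > 0 \<and> Digamma x = c)"

definition beta1 :: "real \<Rightarrow> real" where
  "beta1 a = Digamma_inv (c3 a) - a"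

definition H_M :: "real \<Rightarrow> real \<Rightarrow> real \<Rightarrow> real \<Rightarrow> real" where
  "H_M th1 th2 x1 x2 = (if x1 \<le> x2 then ln th1 else ln th2)"

definition d_est :: "real \<Rightarrow> real \<Rightarrow> real \<Rightarrow> real" where
  "d_est c x1 x2 = ln (min x1 x2) - c"

definition risk :: "real \<Rightarrow> real \<Rightarrow> real \<Rightarrow> (real \<Rightarrow> real \<Rightarrow> real) \<Rightarrow> ennreal" where
  "risk a th1 th2 d =
     (\<integral>\<^sup>+ x. ennreal ((d (fst x) (snd x) - H_M th1 th2 (fst x) (snd x))\<^sup>2
                  * gamma_dens a th1 (fst x) * gamma_dens a th2 (snd x)) \<partial>(lborel \<Otimes>\<^sub>M lborel))"

definition dominates :: "real \<Rightarrow> (real \<Rightarrow> real \<Rightarrow> real) \<Rightarrow> (real \<Rightarrow> real \<Rightarrow> real) \<Rightarrow> bool" where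
  "dominates a d' d \<longleftrightarrow>
     (\<forall>th1>0. \<forall>th2>0. risk a th1 th2 d' \<le> risk a th1 th2 d) \<and>
     (\<exists>th1>0. \<exists>th2>0. risk a th1 th2 d' < risk a th1 th2 d)"

definition inadmissible :: "real \<Rightarrow> (real \<Rightarrow> real \<Rightarrow> real) \<Rightarrow> bool" where
  "inadmissible a d \<longleftrightarrow>
     (\<exists>d'. (\<lambda>x. d' (fst x) (snd x)) \<in> borel_measurable (lborel \<Otimes>\<^sub>M lborel) \<and> dominates a d' d)"

definition admissible_M1 :: "real \<Rightarrow> real \<Rightarrow> bool" where
  "admissible_M1 a c \<longleftrightarrow> \<not> (\<exists>c'. dominates a (d_est c') (d_est c))"

end

theory Submission
  imports Defs "HOL-Probability.Probability_Measure"
begin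

text \<open>
  Write \<open>X\<^sub>i = \<theta>\<^sub>i Y\<^sub>i\<close> with \<open>Y\<^sub>1, Y\<^sub>2\<close> i.i.d. standard gamma. Then
  \<open>ln Z\<^sub>1 - H\<^sub>M(\<theta>)\<close> is a function \<open>K\<^sub>\<theta>(Y)\<close> of \<open>Y\<close> alone, which equals \<open>ln Y\<^sub>1\<close> or \<open>ln Y\<^sub>2\<close>, so
  the risk of \<open>d\<^sub>c\<close> is \<open>Var K\<^sub>\<theta> + (c - m(\<theta>))\<^sup>2\<close> with \<open>m(\<theta>) = E K\<^sub>\<theta>\<close>.
  Within \<open>\<M>\<^sub>1\<close> only the distance from \<open>c\<close> to \<open>m(\<theta>)\<close> matters, and the range of \<open>m\<close> is
  the interval \<open>[c\<^sub>3(\<alpha>), \<psi>(\<alpha>))\<close>: the lower end is attained at \<open>\<theta>\<^sub>1 = \<theta>\<^sub>2\<close>, where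
  \<open>K\<^sub>\<theta> = ln min(Y\<^sub>1, Y\<^sub>2)\<close>, and the upper end \<open>\<psi>(\<alpha>) = E ln Y\<^sub>1\<close> is approached as
  \<open>\<theta>\<^sub>2/\<theta>\<^sub>1 \<rightarrow> \<infinity>\<close>. Hence \<open>d\<^sub>c\<close> is admissible within \<open>\<M>\<^sub>1\<close> iff
  \<open>c\<^sub>3(\<alpha>) \<le> c \<le> \<psi>(\<alpha>)\<close>, and otherwise it is dominated by the nearer end point.
  The remaining ingredients are \<open>\<psi>(\<alpha>) < ln \<alpha>\<close> and the monotonicity of \<open>\<psi>\<close>.
\<close>

section \<open>Euler's integrand\<close>

definition gamma_kernel :: "real \<Rightarrow> real \<Rightarrow> real" where
  "gamma_kernel s t = (if t > 0 then t powr (s - 1) * exp (- t) else 0)"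

lemma gamma_kernel_nonneg: "gamma_kernel s t \<ge> 0"
  by (simp add: gamma_kernel_def)

lemma borel_measurable_gamma_kernel [measurable]: "gamma_kernel s \<in> borel_measurable borel"
  unfolding gamma_kernel_def by measurable

lemma nn_integral_gamma_kernel:
  assumes "s > 0"
  shows "(\<integral>\<^sup>+t. ennreal (gamma_kernel s t) \<partial>lborel) = ennreal (Gamma s)"
proof -
  have "gamma_kernel s t = indicator {0..} t * t powr (s - 1) / exp t" for t
    by (auto simp: gamma_kernel_def indicator_def exp_minus field_simps)
  then show ?thesis
    using Gamma_conv_nn_integral_real[OF assms] by simp
qed

lemma
  assumes "s > 0"
  shows integrable_gamma_kernel: "integrable lborel (gamma_kernel s)"
    and integral_gamma_kernel: "integral\<^sup>L lborel (gamma_kernel s) = Gamma s"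
proof -
  have "integrable lborel (gamma_kernel s) \<and> integral\<^sup>L lborel (gamma_kernel s) = Gamma s"
    using nn_integral_gamma_kernel[OF assms] Gamma_real_pos[OF assms]
    by (subst nn_integral_eq_integrable[symmetric]) (auto simp: gamma_kernel_nonneg)
  then show "integrable lborel (gamma_kernel s)" "integral\<^sup>L lborel (gamma_kernel s) = Gamma s"
    by auto
qed

lemma powr_mult_gamma_kernel: "t powr b * gamma_kernel s t = gamma_kernel (s + b) t"
  by (auto simp: gamma_kernel_def powr_add[symmetric] algebra_simps)

lemma sq_ln_le_powr:
  fixes t e :: real
  assumes "t > 0" "e > 0"
  shows "e\<^sup>2 * (ln t)\<^sup>2 \<le> t powr (2 * e) + t powr (- 2 * e)"
proof -
  define u where "u = e * ln t"
  have "\<bar>u\<bar> \<le> exp \<bar>u\<bar>"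
    using exp_ge_add_one_self[of "\<bar>u\<bar>"] by linarith
  then have "\<bar>u\<bar>\<^sup>2 \<le> (exp \<bar>u\<bar>)\<^sup>2"
    by (intro power_mono) auto
  also have "(exp \<bar>u\<bar>)\<^sup>2 = exp (2 * \<bar>u\<bar>)"
    by (metis exp_add mult_2 power2_eq_square)
  also have "\<dots> \<le> exp (2 * u) + exp (- 2 * u)"
    by (cases "u \<ge> 0") auto
  finally show ?thesis
    using assms by (simp add: u_def powr_def power_mult_distrib algebra_simps)
qed

lemma integrable_sq_ln_gamma_kernel:
  assumes s: "s > 0"
  shows "integrable lborel (\<lambda>t. (ln t)\<^sup>2 * gamma_kernel s t)"
proof (rule Bochner_Integration.integrable_bound)
  define e where "e = s / 4"
  have e: "e > 0"
    using s by (simp add: e_def)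
  show "integrable lborel (\<lambda>t. (gamma_kernel (s + 2 * e) t + gamma_kernel (s - 2 * e) t) / e\<^sup>2)"
    using s by (intro integrable_divide Bochner_Integration.integrable_add integrable_gamma_kernel)
      (auto simp: e_def)
  show "AE t in lborel. norm ((ln t)\<^sup>2 * gamma_kernel s t)
          \<le> norm ((gamma_kernel (s + 2 * e) t + gamma_kernel (s - 2 * e) t) / e\<^sup>2)"
  proof (intro AE_I2)
    fix t :: real
    show "norm ((ln t)\<^sup>2 * gamma_kernel s t)
          \<le> norm ((gamma_kernel (s + 2 * e) t + gamma_kernel (s - 2 * e) t) / e\<^sup>2)"
    proof (cases "t > 0")
      case True
      have "e\<^sup>2 * ((ln t)\<^sup>2 * gamma_kernel s t)
            \<le> (t powr (2 * e) + t powr (- 2 * e)) * gamma_kernel s t"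
        using sq_ln_le_powr[OF True e] gamma_kernel_nonneg[of s t]
        by (simp add: mult_right_mono mult.assoc[symmetric])
      also have "\<dots> = gamma_kernel (s + 2 * e) t + gamma_kernel (s - 2 * e) t"
        by (simp add: distrib_right powr_mult_gamma_kernel)
      finally show ?thesis
        using e gamma_kernel_nonneg[of s t] gamma_kernel_nonneg[of "s + 2 * e" t]
          gamma_kernel_nonneg[of "s - 2 * e" t]
        by (simp add: field_simps)
    qed (simp add: gamma_kernel_def)
  qed
qed simp

lemma integrable_ln_gamma_kernel:
  assumes "s > 0"
  shows "integrable lborel (\<lambda>t. ln t * gamma_kernel s t)"
proof (rule Bochner_Integration.integrable_bound)
  show "integrable lborel (\<lambda>t. gamma_kernel s t + (ln t)\<^sup>2 * gamma_kernel s t)"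
    using assms by (intro Bochner_Integration.integrable_add integrable_gamma_kernel
        integrable_sq_ln_gamma_kernel)
  have "\<bar>ln t\<bar> \<le> 1 + (ln t)\<^sup>2" for t :: real
    using zero_le_power2[of "\<bar>ln t\<bar> - 1"] by (simp add: power2_eq_square algebra_simps)
  then have "\<bar>ln t\<bar> * gamma_kernel s t \<le> (1 + (ln t)\<^sup>2) * gamma_kernel s t" for t
    by (intro mult_right_mono gamma_kernel_nonneg)
  then show "AE t in lborel. norm (ln t * gamma_kernel s t)
               \<le> norm (gamma_kernel s t + (ln t)\<^sup>2 * gamma_kernel s t)"
    by (intro AE_I2) (simp add: abs_mult gamma_kernel_nonneg algebra_simps)
qed simp

lemma abs_exp_minus_one_le: "\<bar>exp (y::real) - 1\<bar> \<le> \<bar>y\<bar> * (1 + exp y)"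
proof (cases "y \<ge> 0")
  case True
  have "1 - y \<le> exp (- y)"
    using exp_ge_add_one_self[of "- y"] by simp
  then have "exp y * (1 - y) \<le> exp y * exp (- y)"
    by (intro mult_left_mono) auto
  then show ?thesis
    using True by (simp add: exp_minus algebra_simps)
next
  case False
  have "y * exp y \<le> 0"
    using False by (simp add: mult_nonpos_nonneg)
  moreover have "1 + y \<le> exp y"
    by (rule exp_ge_add_one_self)
  moreover have "\<bar>exp y - 1\<bar> = 1 - exp y" "\<bar>y\<bar> * (1 + exp y) = - y - y * exp y"
    using False by (simp_all add: algebra_simps)
  ultimately show ?thesis
    by linarith
qed

lemma abs_powr_diff_quotient_le:
  fixes t h :: real
  assumes "t > 0" "0 < h" "h \<le> 1"
  shows "\<bar>(t powr h - 1) / h\<bar> \<le> \<bar>ln t\<bar> * (2 + t)"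
proof -
  have "t powr h \<le> 1 + t"
  proof (cases "t \<le> 1")
    case True
    then have "t powr h \<le> 1 powr h"
      using assms by (intro powr_mono2) auto
    then show ?thesis
      using assms by simp
  next
    case False
    then have "t powr h \<le> t powr 1"
      using assms by (intro powr_mono) auto
    then show ?thesis
      using assms by simp
  qed
  have "\<bar>t powr h - 1\<bar> \<le> \<bar>h * ln t\<bar> * (1 + t powr h)"
    using abs_exp_minus_one_le[of "h * ln t"] assms by (simp add: powr_def mult.commute)
  also have "\<dots> \<le> \<bar>h * ln t\<bar> * (2 + t)"
    using \<open>t powr h \<le> 1 + t\<close> by (intro mult_left_mono) auto
  finally show ?thesis
    using assms by (simp add: abs_mult divide_le_eq mult_ac)
qed

lemma LIMSEQ_difference_quotient:
  assumes "(f has_real_derivative D) (at x)"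
  shows "(\<lambda>n. (f (x + inverse (real (Suc n))) - f x) / inverse (real (Suc n))) \<longlonglongrightarrow> D"
proof -
  have "filterlim (\<lambda>n. inverse (real (Suc n))) (at 0) sequentially"
    by (rule filterlim_mono[OF tendsto_imp_filterlim_at_right[OF LIMSEQ_inverse_real_of_nat]])
      (auto simp: at_within_le_at)
  from filterlim_compose[OF assms[unfolded DERIV_def] this] show ?thesis
    by (simp add: o_def)
qed

lemma gamma_kernel_difference_quotient:
  assumes "t > 0" "h \<noteq> 0"
  shows "(gamma_kernel (s + h) t - gamma_kernel s t) / h = gamma_kernel s t * ((t powr h - 1) / h)"
  using assms powr_mult_gamma_kernel[of t h s] by (simp add: algebra_simps diff_divide_distrib)

lemma abs_gamma_kernel_difference_quotient_le:
  assumes "0 < h" "h \<le> 1"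
  shows "\<bar>(gamma_kernel (s + h) t - gamma_kernel s t) / h\<bar>
    \<le> \<bar>ln t * gamma_kernel s t\<bar> * 2 + \<bar>ln t * gamma_kernel (s + 1) t\<bar>"
proof (cases "t > 0")
  case True
  have "\<bar>(gamma_kernel (s + h) t - gamma_kernel s t) / h\<bar>
      = gamma_kernel s t * \<bar>(t powr h - 1) / h\<bar>"
    using True assms by (simp add: gamma_kernel_difference_quotient abs_mult gamma_kernel_nonneg)
  also have "\<dots> \<le> gamma_kernel s t * (\<bar>ln t\<bar> * (2 + t))"
    using abs_powr_diff_quotient_le[OF True assms] gamma_kernel_nonneg by (rule mult_left_mono)
  also have "\<dots> = \<bar>ln t * gamma_kernel s t\<bar> * 2 + \<bar>ln t * gamma_kernel (s + 1) t\<bar>"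
    using True powr_mult_gamma_kernel[of t 1 s]
    by (simp add: abs_mult abs_of_nonneg[OF gamma_kernel_nonneg] algebra_simps)
  finally show ?thesis .
qed (simp add: gamma_kernel_def)

lemma LIMSEQ_gamma_kernel_difference_quotient:
  "(\<lambda>n. (gamma_kernel (s + inverse (real (Suc n))) t - gamma_kernel s t) / inverse (real (Suc n)))
     \<longlonglongrightarrow> ln t * gamma_kernel s t"
proof (cases "t > 0")
  case True
  have "((\<lambda>x. exp (x * ln t)) has_real_derivative exp (0 * ln t) * ln t) (at 0)"
    by (auto intro!: derivative_eq_intros)
  from tendsto_mult_left[OF LIMSEQ_difference_quotient[OF this], of "gamma_kernel s t"]
  show ?thesis
    using True by (simp add: gamma_kernel_difference_quotient powr_def ac_simps)
qed (simp add: gamma_kernel_def)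

text \<open>Differentiation of Euler's integral under the integral sign.\<close>

lemma integral_ln_gamma_kernel:
  assumes s: "s > 0"
  shows "(\<integral>t. ln t * gamma_kernel s t \<partial>lborel) = Gamma s * Digamma s"
proof -
  define h :: "nat \<Rightarrow> real" where "h n = inverse (real (Suc n))" for n
  have h: "0 < h n" "h n \<le> 1" for n
    by (auto simp: h_def field_simps)
  define F where "F n t = (gamma_kernel (s + h n) t - gamma_kernel s t) / h n" for n t
  have "(Gamma has_real_derivative Gamma s * Digamma s) (at s)"
    using s by (intro has_field_derivative_Gamma) auto
  then have "(\<lambda>n. (Gamma (s + h n) - Gamma s) / h n) \<longlonglongrightarrow> Gamma s * Digamma s"
    unfolding h_def by (rule LIMSEQ_difference_quotient)
  moreover have "integral\<^sup>L lborel (F n) = (Gamma (s + h n) - Gamma s) / h n" for n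
    unfolding F_def using s h[of n]
    by (simp add: integrable_gamma_kernel integral_gamma_kernel)
  moreover have "(\<lambda>n. integral\<^sup>L lborel (F n)) \<longlonglongrightarrow> (\<integral>t. ln t * gamma_kernel s t \<partial>lborel)"
  proof (rule integral_dominated_convergence
      [where w = "\<lambda>t. \<bar>ln t * gamma_kernel s t\<bar> * 2 + \<bar>ln t * gamma_kernel (s + 1) t\<bar>"])
    show "integrable lborel (\<lambda>t. \<bar>ln t * gamma_kernel s t\<bar> * 2 + \<bar>ln t * gamma_kernel (s + 1) t\<bar>)"
      using s by (intro Bochner_Integration.integrable_add integrable_mult_left integrable_abs
          integrable_ln_gamma_kernel) auto
    show "AE t in lborel. (\<lambda>n. F n t) \<longlonglongrightarrow> ln t * gamma_kernel s t"
      unfolding F_def h_def by (intro AE_I2 LIMSEQ_gamma_kernel_difference_quotient)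
    show "AE t in lborel. norm (F n t)
            \<le> \<bar>ln t * gamma_kernel s t\<bar> * 2 + \<bar>ln t * gamma_kernel (s + 1) t\<bar>" for n
      unfolding F_def real_norm_def by (intro AE_I2 abs_gamma_kernel_difference_quotient_le h)
    show "F n \<in> borel_measurable lborel" for n
      unfolding F_def by measurable
  qed simp
  ultimately show ?thesis
    using LIMSEQ_unique by auto
qed

section \<open>The gamma distribution\<close>

definition std_gamma :: "real \<Rightarrow> real measure" where
  "std_gamma a = density lborel (\<lambda>t. ennreal (g_std a t))"

definition gamma_measure :: "real \<Rightarrow> real \<Rightarrow> real measure" where
  "gamma_measure a th = density lborel (\<lambda>t. ennreal (gamma_dens a th t))"

lemma borel_measurable_gamma_dens [measurable]: "gamma_dens a th \<in> borel_measurable borel"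
  unfolding gamma_dens_def by measurable

lemma borel_measurable_g_std [measurable]: "g_std a \<in> borel_measurable borel"
  unfolding g_std_def by measurable

lemma gamma_dens_nonneg: "a > 0 \<Longrightarrow> th > 0 \<Longrightarrow> gamma_dens a th x \<ge> 0"
  by (simp add: gamma_dens_def)

lemma g_std_eq_gamma_kernel: "g_std a t = gamma_kernel a t / Gamma a"
  by (simp add: g_std_def gamma_dens_def gamma_kernel_def)

lemma g_std_nonneg: "a > 0 \<Longrightarrow> g_std a t \<ge> 0"
  by (simp add: g_std_eq_gamma_kernel gamma_kernel_nonneg)

lemma sets_std_gamma [simp, measurable_cong]: "sets (std_gamma a) = sets borel"
  by (simp add: std_gamma_def)

lemma space_std_gamma [simp]: "space (std_gamma a) = UNIV"
  by (simp add: std_gamma_def)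

lemma
  fixes f :: "real \<Rightarrow> real"
  assumes a: "a > 0" and [measurable]: "f \<in> borel_measurable borel"
  shows integrable_std_gamma_iff:
      "integrable (std_gamma a) f \<longleftrightarrow> integrable lborel (\<lambda>t. g_std a t * f t)"
    and integral_std_gamma: "integral\<^sup>L (std_gamma a) f = (\<integral>t. g_std a t * f t \<partial>lborel)"
proof -
  have "AE t in lborel. 0 \<le> g_std a t"
    using g_std_nonneg[OF a] by simp
  then show "integrable (std_gamma a) f \<longleftrightarrow> integrable lborel (\<lambda>t. g_std a t * f t)"
    "integral\<^sup>L (std_gamma a) f = (\<integral>t. g_std a t * f t \<partial>lborel)"
    unfolding std_gamma_def by (subst integrable_real_density integral_real_density; simp)+
qed

lemma prob_space_std_gamma:
  assumes a: "a > 0"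
  shows "prob_space (std_gamma a)"
proof (rule prob_spaceI)
  have "emeasure (std_gamma a) UNIV = (\<integral>\<^sup>+t. ennreal (gamma_kernel a t) / ennreal (Gamma a) \<partial>lborel)"
    using a Gamma_real_pos[OF a] less_imp_neq[OF Gamma_real_pos[OF a]]
    by (simp add: std_gamma_def emeasure_density g_std_eq_gamma_kernel divide_ennreal gamma_kernel_nonneg)
  also have "\<dots> = 1"
    using a Gamma_real_pos[OF a] less_imp_neq[OF Gamma_real_pos[OF a]]
    by (simp add: nn_integral_divide nn_integral_gamma_kernel divide_ennreal)
  finally show "emeasure (std_gamma a) (space (std_gamma a)) = 1"
    by simp
qed

lemma AE_std_gamma_pos: "AE t in std_gamma a. t > 0"
  unfolding std_gamma_def
  by (subst AE_density) (auto intro!: AE_I2 simp: g_std_eq_gamma_kernel gamma_kernel_def)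

lemma gamma_dens_scale:
  assumes th: "th > 0"
  shows "th * gamma_dens a th (th * y) = g_std a y"
proof (cases "y > 0")
  case True
  have "(th * y) powr (a - 1) = th powr (a - 1) * y powr (a - 1)"
    using th True by (simp add: powr_mult)
  moreover have "th powr a = th powr (a - 1) * th"
    using th by (simp add: powr_diff)
  ultimately show ?thesis
    using th True by (simp add: gamma_dens_def g_std_def field_simps)
next
  case False
  then show ?thesis
    using th by (simp add: gamma_dens_def g_std_def zero_less_mult_iff)
qed

lemma gamma_measure_eq_distr:
  assumes a: "a > 0" and th: "th > 0"
  shows "gamma_measure a th = distr (std_gamma a) lborel (\<lambda>y. th * y)"
proof (rule measure_eqI)
  fix A assume "A \<in> sets (gamma_measure a th)"
  then have A [measurable]: "A \<in> sets borel"
    by (simp add: gamma_measure_def)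
  have "emeasure (gamma_measure a th) A
      = (\<integral>\<^sup>+x. ennreal (gamma_dens a th x) * indicator A x \<partial>lborel)"
    by (simp add: gamma_measure_def emeasure_density)
  also have "\<dots> = ennreal th * (\<integral>\<^sup>+y. ennreal (gamma_dens a th (0 + th * y))
      * indicator A (0 + th * y) \<partial>lborel)"
    using th by (subst nn_integral_real_affine[where c = th and t = 0]) auto
  also have "\<dots> = (\<integral>\<^sup>+y. ennreal (g_std a y) * indicator ((\<lambda>y. th * y) -` A) y \<partial>lborel)"
    using th gamma_dens_nonneg[OF a th] gamma_dens_scale[OF th]
    by (subst nn_integral_cmult[symmetric])
      (auto intro!: nn_integral_cong simp: ennreal_mult'[symmetric] mult.assoc[symmetric] indicator_def)
  also have "\<dots> = emeasure (distr (std_gamma a) lborel (\<lambda>y. th * y)) A"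
    using measurable_sets[of "\<lambda>y. th * y" borel borel A]
    by (simp add: emeasure_distr std_gamma_def emeasure_density)
  finally show "emeasure (gamma_measure a th) A = emeasure (distr (std_gamma a) lborel (\<lambda>y. th * y)) A" .
qed (simp add: gamma_measure_def)

lemma prob_space_gamma_measure: "a > 0 \<Longrightarrow> th > 0 \<Longrightarrow> prob_space (gamma_measure a th)"
  using prob_space.prob_space_distr[OF prob_space_std_gamma, of a "\<lambda>y. th * y" lborel]
  by (simp add: gamma_measure_eq_distr)

lemma
  assumes a: "a > 0"
  shows integrable_std_gamma_ln: "integrable (std_gamma a) ln"
    and integrable_std_gamma_sq_ln: "integrable (std_gamma a) (\<lambda>t. (ln t)\<^sup>2)"
    and integral_std_gamma_ln: "integral\<^sup>L (std_gamma a) ln = Digamma a"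
  using a less_imp_neq[OF Gamma_real_pos[OF a]]
    integrable_divide[OF integrable_ln_gamma_kernel[OF a], of "Gamma a"]
    integrable_divide[OF integrable_sq_ln_gamma_kernel[OF a], of "Gamma a"]
  by (simp_all add: integrable_std_gamma_iff integral_std_gamma g_std_eq_gamma_kernel
      integral_ln_gamma_kernel mult.commute)

lemma
  assumes a: "a > 0"
  shows integrable_std_gamma_id: "integrable (std_gamma a) (\<lambda>t. t)"
    and integral_std_gamma_id: "(\<integral>t. t \<partial>std_gamma a) = a"
proof -
  have eq: "g_std a t * t = gamma_kernel (a + 1) t / Gamma a" for t
    using powr_mult_gamma_kernel[of t 1 a]
    by (cases "t > 0") (simp_all add: g_std_eq_gamma_kernel gamma_kernel_def mult.commute)
  show "integrable (std_gamma a) (\<lambda>t. t)"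
    using a by (simp add: integrable_std_gamma_iff eq integrable_gamma_kernel)
  show "(\<integral>t. t \<partial>std_gamma a) = a"
    using a Gamma_plus1[of a] less_imp_neq[OF Gamma_real_pos[OF a]] nonpos_Ints_nonpos[of a]
    by (force simp: integral_std_gamma eq integral_gamma_kernel)
qed

text \<open>Jensen for the concave \<open>ln\<close>, via the tangent line \<open>ln t \<le> ln a + t/a - 1\<close>.\<close>

lemma Digamma_le_ln:
  assumes a: "a > (0::real)"
  shows "Digamma a \<le> ln a"
proof -
  interpret prob_space "std_gamma a"
    by (rule prob_space_std_gamma[OF a])
  have "Digamma a = (\<integral>t. ln t \<partial>std_gamma a)"
    using integral_std_gamma_ln[OF a] by simp
  also have "\<dots> \<le> (\<integral>t. (ln a - 1) + t / a \<partial>std_gamma a)"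
  proof (rule integral_mono_AE)
    show "integrable (std_gamma a) (\<lambda>t. (ln a - 1) + t / a)"
      using integrable_std_gamma_id[OF a] by auto
    show "AE t in std_gamma a. ln t \<le> (ln a - 1) + t / a"
      using AE_std_gamma_pos[of a]
    proof eventually_elim
      case (elim t)
      have "ln (t / a) \<le> t / a - 1"
        using elim a by (intro ln_le_minus_one) auto
      then show ?case
        using elim a by (simp add: ln_div)
    qed
  qed (rule integrable_std_gamma_ln[OF a])
  also have "\<dots> = ln a"
    using integrable_std_gamma_id[OF a] integral_std_gamma_id[OF a] a prob_space
    by (simp add: Bochner_Integration.integral_add)
  finally show ?thesis .
qed

lemma Digamma_less_ln:
  assumes a: "a > (0::real)"
  shows "Digamma a < ln a"
proof -
  have "Digamma a = Digamma (a + 1) - 1 / a"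
    using a Digamma_plus1[of a] by simp
  also have "\<dots> \<le> ln (a + 1) - 1 / a"
    using Digamma_le_ln[of "a + 1"] a by simp
  also have "ln (a + 1) = ln (a * (1 + 1 / a))"
    using a by (simp add: distrib_left)
  also have "\<dots> = ln a + ln (1 + 1 / a)"
    using a by (intro ln_mult_pos) (auto intro: add_pos_pos)
  also have "ln (1 + 1 / a) < 1 / a"
    using a by (intro ln_add_one_self_less_self) auto
  finally show ?thesis
    by simp
qed

lemma mono_G_std:
  assumes a: "a > 0"
  shows "mono (G_std a)"
proof (rule monoI)
  fix x y :: real
  assume "x \<le> y"
  have "integrable lborel (g_std a)"
    using integrable_divide[OF integrable_gamma_kernel[OF a], of "Gamma a"]
    by (simp add: g_std_eq_gamma_kernel[abs_def])
  then have "integrable lborel (\<lambda>t. indicator {0..b} t *\<^sub>R g_std a t)" for b :: real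
    by (rule Bochner_Integration.integrable_bound) (auto simp: indicator_def g_std_nonneg[OF a])
  then show "G_std a x \<le> G_std a y"
    unfolding G_std_def set_lebesgue_integral_def
    using \<open>x \<le> y\<close> g_std_nonneg[OF a] by (intro integral_mono) (auto simp: indicator_def)
qed

lemma borel_measurable_G_std [measurable]: "a > 0 \<Longrightarrow> G_std a \<in> borel_measurable borel"
  by (rule borel_measurable_mono[OF mono_G_std])

lemma
  assumes a: "a > 0"
  shows measure_std_gamma_atMost: "measure (std_gamma a) {..x} = G_std a x"
    and measure_std_gamma_singleton: "measure (std_gamma a) {x} = 0"
proof -
  interpret prob_space "std_gamma a"
    by (rule prob_space_std_gamma[OF a])
  have measure_eq: "measure (std_gamma a) A = (\<integral>t. g_std a t * indicator A t \<partial>lborel)"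
    if "A \<in> sets borel" for A
    using that by (simp flip: integral_std_gamma[OF a] add: emeasure_eq_measure)
  show "measure (std_gamma a) {..x} = G_std a x"
    unfolding measure_eq[OF atMost_borel] G_std_def set_lebesgue_integral_def
    by (intro Bochner_Integration.integral_cong)
      (auto simp: indicator_def g_std_eq_gamma_kernel gamma_kernel_def)
  have "AE t in lborel. g_std a t * indicator {x} t = 0"
    using AE_lborel_singleton[of x] by eventually_elim auto
  then have "(\<integral>t. g_std a t * indicator {x} t \<partial>lborel) = 0"
    by (rule integral_eq_zero_AE)
  then show "measure (std_gamma a) {x} = 0"
    using measure_eq[of "{x}"] by simp
qed

lemma
  assumes a: "a > 0"
  shows measure_std_gamma_greaterThan: "measure (std_gamma a) {x<..} = 1 - G_std a x"
    and measure_std_gamma_atLeast: "measure (std_gamma a) {x..} = 1 - G_std a x"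
proof -
  interpret prob_space "std_gamma a"
    by (rule prob_space_std_gamma[OF a])
  have "measure (std_gamma a) (UNIV - {..x}) = 1 - measure (std_gamma a) {..x}"
    using prob_compl[of "{..x}"] by simp
  moreover have "UNIV - {..x} = {x<..}"
    by auto
  ultimately show *: "measure (std_gamma a) {x<..} = 1 - G_std a x"
    by (simp add: measure_std_gamma_atMost[OF a])
  have "measure (std_gamma a) ({x} \<union> {x<..}) = measure (std_gamma a) {x} + measure (std_gamma a) {x<..}"
    by (rule finite_measure_Union) auto
  moreover have "{x} \<union> {x<..} = {x..}"
    by auto
  ultimately show "measure (std_gamma a) {x..} = 1 - G_std a x"
    by (simp add: * measure_std_gamma_singleton[OF a])
qed

section \<open>The risk of \<open>d\<^sub>c\<close>\<close>

abbreviation std_gamma_pair :: "real \<Rightarrow> (real \<times> real) measure" where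
  "std_gamma_pair a \<equiv> std_gamma a \<Otimes>\<^sub>M std_gamma a"

text \<open>\<open>ln Z\<^sub>1 - H\<^sub>M(\<theta>)\<close> at the data \<open>(\<theta>\<^sub>1 y\<^sub>1, \<theta>\<^sub>2 y\<^sub>2)\<close>.\<close>

definition log_min_residual :: "real \<Rightarrow> real \<Rightarrow> real \<times> real \<Rightarrow> real" where
  "log_min_residual th1 th2 y = (if th1 * fst y \<le> th2 * snd y then ln (fst y) else ln (snd y))"

definition residual_mean :: "real \<Rightarrow> real \<Rightarrow> real \<Rightarrow> real" where
  "residual_mean a th1 th2 = (\<integral>y. log_min_residual th1 th2 y \<partial>std_gamma_pair a)"

lemma borel_measurable_log_min_residual [measurable]:
  "log_min_residual th1 th2 \<in> borel_measurable (borel \<Otimes>\<^sub>M borel)"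
  unfolding log_min_residual_def by measurable

lemma pair_prob_space_std_gamma: "a > 0 \<Longrightarrow> pair_prob_space (std_gamma a) (std_gamma a)"
  by (simp add: pair_prob_space_def pair_sigma_finite_def prob_space_std_gamma
      prob_space_imp_sigma_finite)

lemma AE_std_gamma_pair_pos:
  assumes a: "a > 0"
  shows "AE y in std_gamma_pair a. fst y > 0 \<and> snd y > 0"
proof -
  interpret pair_prob_space "std_gamma a" "std_gamma a"
    by (rule pair_prob_space_std_gamma[OF a])
  show ?thesis
  proof (rule AE_pair_measure)
    show "AE x in std_gamma a. AE y in std_gamma a. fst (x, y) > 0 \<and> snd (x, y) > 0"
      using AE_std_gamma_pos[of a] by (auto elim!: eventually_mono)
  qed measurable
qed

lemma risk_d_est_eq_nn_integral:
  assumes a: "a > 0" and th1: "th1 > 0" and th2: "th2 > 0"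
  shows "risk a th1 th2 (d_est c)
           = (\<integral>\<^sup>+y. ennreal ((log_min_residual th1 th2 y - c)\<^sup>2) \<partial>std_gamma_pair a)"
proof -
  define L where "L x = (d_est c (fst x) (snd x) - H_M th1 th2 (fst x) (snd x))\<^sup>2" for x
  have [measurable]: "L \<in> borel_measurable (borel \<Otimes>\<^sub>M borel)"
    unfolding L_def d_est_def H_M_def by measurable
  have sf: "sigma_finite_measure (gamma_measure a th)" if "th > 0" for th
    by (rule prob_space_imp_sigma_finite[OF prob_space_gamma_measure[OF a that]])
  have dens: "gamma_measure a th1 \<Otimes>\<^sub>M gamma_measure a th2 = density (lborel \<Otimes>\<^sub>M lborel)
      (\<lambda>(x, y). ennreal (gamma_dens a th1 x) * ennreal (gamma_dens a th2 y))"
    unfolding gamma_measure_def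
    by (rule pair_measure_density)
      (auto simp: sf[OF th2, unfolded gamma_measure_def] lborel.sigma_finite_measure_axioms)
  have "risk a th1 th2 (d_est c) = (\<integral>\<^sup>+x. ennreal (gamma_dens a th1 (fst x))
      * ennreal (gamma_dens a th2 (snd x)) * ennreal (L x) \<partial>(lborel \<Otimes>\<^sub>M lborel))"
    unfolding risk_def L_def using gamma_dens_nonneg[OF a th1] gamma_dens_nonneg[OF a th2]
    by (intro nn_integral_cong) (simp add: ennreal_mult'[symmetric] mult_ac)
  also have "\<dots> = (\<integral>\<^sup>+x. ennreal (L x) \<partial>(gamma_measure a th1 \<Otimes>\<^sub>M gamma_measure a th2))"
    unfolding dens by (subst nn_integral_density) (auto simp: split_beta')
  also have "gamma_measure a th1 \<Otimes>\<^sub>M gamma_measure a th2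
      = distr (std_gamma_pair a) (lborel \<Otimes>\<^sub>M lborel) (\<lambda>(x, y). (th1 * x, th2 * y))"
    unfolding gamma_measure_eq_distr[OF a th1] gamma_measure_eq_distr[OF a th2]
    using sf[OF th2] by (intro pair_measure_distr) (auto simp: gamma_measure_eq_distr[OF a th2])
  also have "(\<integral>\<^sup>+x. ennreal (L x) \<partial>\<dots>)
      = (\<integral>\<^sup>+y. ennreal (L (th1 * fst y, th2 * snd y)) \<partial>std_gamma_pair a)"
    by (subst nn_integral_distr) (auto simp: split_beta')
  also have "\<dots> = (\<integral>\<^sup>+y. ennreal ((log_min_residual th1 th2 y - c)\<^sup>2) \<partial>std_gamma_pair a)"
    using AE_std_gamma_pair_pos[OF a]
    by (intro nn_integral_cong_AE, eventually_elim)
      (use th1 th2 in \<open>auto simp: L_def d_est_def H_M_def log_min_residual_def ln_mult min_def\<close>)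
  finally show ?thesis .
qed

lemma
  fixes f :: "real \<Rightarrow> real"
  assumes a: "a > 0" and f [measurable]: "f \<in> borel_measurable borel"
    and f_int: "integrable (std_gamma a) f"
  shows integrable_std_gamma_pair_fst: "integrable (std_gamma_pair a) (\<lambda>y. f (fst y))"
    and integral_std_gamma_pair_fst: "(\<integral>y. f (fst y) \<partial>std_gamma_pair a) = integral\<^sup>L (std_gamma a) f"
    and integrable_std_gamma_pair_snd: "integrable (std_gamma_pair a) (\<lambda>y. f (snd y))"
    and integral_std_gamma_pair_snd: "(\<integral>y. f (snd y) \<partial>std_gamma_pair a) = integral\<^sup>L (std_gamma a) f"
proof -
  interpret pair_prob_space "std_gamma a" "std_gamma a"
    by (rule pair_prob_space_std_gamma[OF a])
  note distr_fst = M1.distr_pair_fst[of "std_gamma a"]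
  show fst_int: "integrable (std_gamma_pair a) (\<lambda>y. f (fst y))"
    using f_int integrable_distr_eq[of fst "std_gamma_pair a" "std_gamma a" f] by (simp add: distr_fst)
  show fst_eq: "(\<integral>y. f (fst y) \<partial>std_gamma_pair a) = integral\<^sup>L (std_gamma a) f"
    using integral_distr[of fst "std_gamma_pair a" "std_gamma a" f] by (simp add: distr_fst)
  show "integrable (std_gamma_pair a) (\<lambda>y. f (snd y))"
    using integrable_product_swap[OF fst_int] by (simp add: split_beta')
  show "(\<integral>y. f (snd y) \<partial>std_gamma_pair a) = integral\<^sup>L (std_gamma a) f"
    using integral_product_swap[of "\<lambda>y. f (fst y)"] fst_eq by (simp add: split_beta')
qed

lemma integrable_std_gamma_pair_if_ln_bounded:
  assumes a: "a > 0" and [measurable]: "f \<in> borel_measurable (borel \<Otimes>\<^sub>M borel)"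
    and bound: "\<And>y. \<bar>f y\<bar> \<le> \<bar>ln (fst y)\<bar> + \<bar>ln (snd y)\<bar>"
  shows "integrable (std_gamma_pair a) f"
proof (rule Bochner_Integration.integrable_bound)
  show "integrable (std_gamma_pair a) (\<lambda>y. \<bar>ln (fst y)\<bar> + \<bar>ln (snd y)\<bar>)"
    using integrable_std_gamma_ln[OF a]
    by (intro Bochner_Integration.integrable_add integrable_abs
        integrable_std_gamma_pair_fst integrable_std_gamma_pair_snd a) auto
qed (use bound in auto)

lemma
  assumes a: "a > 0"
  shows integrable_log_min_residual: "integrable (std_gamma_pair a) (log_min_residual th1 th2)"
    and integrable_sq_log_min_residual:
      "integrable (std_gamma_pair a) (\<lambda>y. (log_min_residual th1 th2 y)\<^sup>2)"
proof -
  show "integrable (std_gamma_pair a) (log_min_residual th1 th2)"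
    by (rule integrable_std_gamma_pair_if_ln_bounded[OF a]) (auto simp: log_min_residual_def)
  show "integrable (std_gamma_pair a) (\<lambda>y. (log_min_residual th1 th2 y)\<^sup>2)"
  proof (rule Bochner_Integration.integrable_bound)
    show "integrable (std_gamma_pair a) (\<lambda>y. (ln (fst y))\<^sup>2 + (ln (snd y))\<^sup>2)"
      using integrable_std_gamma_sq_ln[OF a]
      by (intro Bochner_Integration.integrable_add
          integrable_std_gamma_pair_fst integrable_std_gamma_pair_snd a) auto
  qed (auto simp: log_min_residual_def)
qed

lemma
  assumes a: "a > 0" and th1: "th1 > 0" and th2: "th2 > 0"
  defines "m \<equiv> residual_mean a th1 th2"
    and "v \<equiv> (\<integral>y. (log_min_residual th1 th2 y)\<^sup>2 \<partial>std_gamma_pair a) - (residual_mean a th1 th2)\<^sup>2"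
  shows risk_d_est: "risk a th1 th2 (d_est c) = ennreal (v + (c - m)\<^sup>2)"
    and risk_d_est_nonneg: "v + (c - m)\<^sup>2 \<ge> 0"
proof -
  interpret pair_prob_space "std_gamma a" "std_gamma a"
    by (rule pair_prob_space_std_gamma[OF a])
  note K_int = integrable_log_min_residual[OF a] integrable_sq_log_min_residual[OF a]
  have expand: "(\<lambda>y. (log_min_residual th1 th2 y - c)\<^sup>2)
      = (\<lambda>y. (log_min_residual th1 th2 y)\<^sup>2 - 2 * c * log_min_residual th1 th2 y + c\<^sup>2)"
    by (auto simp: power2_eq_square algebra_simps)
  have int: "integrable (std_gamma_pair a) (\<lambda>y. (log_min_residual th1 th2 y - c)\<^sup>2)"
    unfolding expand using K_int by auto
  have eq: "(\<integral>y. (log_min_residual th1 th2 y - c)\<^sup>2 \<partial>std_gamma_pair a) = v + (c - m)\<^sup>2"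
    unfolding expand using K_int
    by (simp add: v_def m_def residual_mean_def prob_space power2_eq_square algebra_simps)
  show "risk a th1 th2 (d_est c) = ennreal (v + (c - m)\<^sup>2)"
    unfolding risk_d_est_eq_nn_integral[OF a th1 th2] eq[symmetric]
    by (rule nn_integral_eq_integral[OF int]) auto
  show "v + (c - m)\<^sup>2 \<ge> 0"
    unfolding eq[symmetric] by (rule Bochner_Integration.integral_nonneg) auto
qed

lemma
  assumes "a > 0" "th1 > 0" "th2 > 0"
  shows risk_d_est_le_iff: "risk a th1 th2 (d_est c') \<le> risk a th1 th2 (d_est c)
      \<longleftrightarrow> \<bar>c' - residual_mean a th1 th2\<bar> \<le> \<bar>c - residual_mean a th1 th2\<bar>"
    and risk_d_est_less_iff: "risk a th1 th2 (d_est c') < risk a th1 th2 (d_est c)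
      \<longleftrightarrow> \<bar>c' - residual_mean a th1 th2\<bar> < \<bar>c - residual_mean a th1 th2\<bar>"
proof -
  have "x\<^sup>2 < y\<^sup>2 \<longleftrightarrow> \<bar>x\<bar> < \<bar>y\<bar>" for x y :: real
    by (meson abs_le_square_iff not_le)
  then show "risk a th1 th2 (d_est c') \<le> risk a th1 th2 (d_est c)
      \<longleftrightarrow> \<bar>c' - residual_mean a th1 th2\<bar> \<le> \<bar>c - residual_mean a th1 th2\<bar>"
    "risk a th1 th2 (d_est c') < risk a th1 th2 (d_est c)
      \<longleftrightarrow> \<bar>c' - residual_mean a th1 th2\<bar> < \<bar>c - residual_mean a th1 th2\<bar>"
    using risk_d_est_nonneg[OF assms, of c] risk_d_est_nonneg[OF assms, of c']
    by (simp_all add: risk_d_est[OF assms] ennreal_le_iff ennreal_less_iff abs_le_square_iff)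
qed

section \<open>The range of the residual mean\<close>

lemma log_min_residual_le_ln_fst:
  assumes "th1 \<le> th2" "th2 > 0" "fst y > 0" "snd y > 0"
  shows "log_min_residual th1 th2 y \<le> ln (fst y)"
proof (cases "th1 * fst y \<le> th2 * snd y")
  case False
  have "th2 * snd y < th2 * fst y"
    using False assms mult_right_mono[of th1 th2 "fst y"] by linarith
  then show ?thesis
    using False assms by (simp add: log_min_residual_def)
qed (simp add: log_min_residual_def)

lemma log_min_residual_le_ln_snd:
  assumes "th2 \<le> th1" "th1 > 0" "fst y > 0" "snd y > 0"
  shows "log_min_residual th1 th2 y \<le> ln (snd y)"
proof (cases "th1 * fst y \<le> th2 * snd y")
  case True
  have "th1 * fst y \<le> th1 * snd y"
    using True assms mult_right_mono[of th2 th1 "snd y"] by linarith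
  then show ?thesis
    using True assms by (simp add: log_min_residual_def)
qed (simp add: log_min_residual_def)

lemma residual_mean_le_Digamma:
  assumes a: "a > 0" and th1: "th1 > 0" and th2: "th2 > 0"
  shows "residual_mean a th1 th2 \<le> Digamma a"
proof -
  note ln_int = integrable_std_gamma_ln[OF a]
  note K_int = integrable_log_min_residual[OF a]
  show ?thesis
  proof (cases "th1 \<le> th2")
    case True
    have "AE y in std_gamma_pair a. log_min_residual th1 th2 y \<le> ln (fst y)"
      using AE_std_gamma_pair_pos[OF a]
      by eventually_elim (auto intro: log_min_residual_le_ln_fst[OF True th2])
    then have "residual_mean a th1 th2 \<le> (\<integral>y. ln (fst y) \<partial>std_gamma_pair a)"
      unfolding residual_mean_def
      using K_int integrable_std_gamma_pair_fst[OF a _ ln_int] by (intro integral_mono_AE) auto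
    then show ?thesis
      using integral_std_gamma_pair_fst[OF a _ ln_int] integral_std_gamma_ln[OF a] by simp
  next
    case False
    have "AE y in std_gamma_pair a. log_min_residual th1 th2 y \<le> ln (snd y)"
      using AE_std_gamma_pair_pos[OF a]
      by eventually_elim (use False in \<open>auto intro: log_min_residual_le_ln_snd[OF _ th1]\<close>)
    then have "residual_mean a th1 th2 \<le> (\<integral>y. ln (snd y) \<partial>std_gamma_pair a)"
      unfolding residual_mean_def
      using K_int integrable_std_gamma_pair_snd[OF a _ ln_int] by (intro integral_mono_AE) auto
    then show ?thesis
      using integral_std_gamma_pair_snd[OF a _ ln_int] integral_std_gamma_ln[OF a] by simp
  qed
qed

lemma residual_mean_one_one_le:
  assumes a: "a > 0"
  shows "residual_mean a 1 1 \<le> residual_mean a th1 th2"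
proof -
  have "AE y in std_gamma_pair a. log_min_residual 1 1 y \<le> log_min_residual th1 th2 y"
    using AE_std_gamma_pair_pos[OF a] by eventually_elim (auto simp: log_min_residual_def)
  then show ?thesis
    unfolding residual_mean_def
    using integrable_log_min_residual[OF a] by (intro integral_mono_AE) auto
qed

text \<open>As \<open>\<theta>\<^sub>2/\<theta>\<^sub>1 \<rightarrow> \<infinity>\<close> the minimum is eventually always \<open>X\<^sub>1\<close>.\<close>

lemma residual_mean_tendsto_Digamma:
  assumes a: "a > 0"
  shows "(\<lambda>n. residual_mean a 1 (real n + 1)) \<longlonglongrightarrow> Digamma a"
proof -
  note ln_int = integrable_std_gamma_ln[OF a]
  have "(\<lambda>n. residual_mean a 1 (real n + 1)) \<longlonglongrightarrow> (\<integral>y. ln (fst y) \<partial>std_gamma_pair a)"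
    unfolding residual_mean_def
  proof (rule integral_dominated_convergence[where w = "\<lambda>y. \<bar>ln (fst y)\<bar> + \<bar>ln (snd y)\<bar>"])
    show "integrable (std_gamma_pair a) (\<lambda>y. \<bar>ln (fst y)\<bar> + \<bar>ln (snd y)\<bar>)"
      using ln_int by (intro Bochner_Integration.integrable_add integrable_abs
          integrable_std_gamma_pair_fst integrable_std_gamma_pair_snd a) auto
    show "AE y in std_gamma_pair a. norm (log_min_residual 1 (real n + 1) y)
            \<le> \<bar>ln (fst y)\<bar> + \<bar>ln (snd y)\<bar>" for n
      by (intro AE_I2) (auto simp: log_min_residual_def)
    show "AE y in std_gamma_pair a. (\<lambda>n. log_min_residual 1 (real n + 1) y) \<longlonglongrightarrow> ln (fst y)"
      using AE_std_gamma_pair_pos[OF a]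
    proof eventually_elim
      case (elim y)
      obtain N :: nat where N: "fst y / snd y < real N"
        using reals_Archimedean2 by blast
      have "fst y \<le> (real n + 1) * snd y" if "N \<le> n" for n
        using N that elim by (simp add: divide_less_eq) (smt (verit) mult_right_mono of_nat_mono)
      then have "\<forall>\<^sub>F n in sequentially. log_min_residual 1 (real n + 1) y = ln (fst y)"
        by (auto simp: eventually_sequentially log_min_residual_def)
      then show ?case
        by (rule tendsto_eventually)
    qed
  qed measurable
  then show ?thesis
    using integral_std_gamma_pair_fst[OF a _ ln_int] integral_std_gamma_ln[OF a] by simp
qed

text \<open>
  At \<open>\<theta>\<^sub>1 = \<theta>\<^sub>2\<close> the residual is \<open>ln min(Y\<^sub>1, Y\<^sub>2)\<close>; splitting on which coordinate is
  smaller and swapping the coordinates in one half turns its mean into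
  \<open>E[ln Y\<^sub>1 (P(Y\<^sub>2 \<ge> Y\<^sub>1 | Y\<^sub>1) + P(Y\<^sub>2 > Y\<^sub>1 | Y\<^sub>1))] = 2 E[ln Y\<^sub>1 (1 - G\<^sub>\<alpha>(Y\<^sub>1))]\<close>.
\<close>

lemma residual_mean_one_one_eq_c3:
  assumes a: "a > 0"
  shows "residual_mean a 1 1 = c3 a"
proof -
  interpret pair_prob_space "std_gamma a" "std_gamma a"
    by (rule pair_prob_space_std_gamma[OF a])
  define f_le where "f_le y = (if fst y \<le> snd y then ln (fst y) else 0)" for y :: "real \<times> real"
  define f_lt where "f_lt y = (if fst y < snd y then ln (fst y) else 0)" for y :: "real \<times> real"
  have [measurable]: "f_le \<in> borel_measurable (borel \<Otimes>\<^sub>M borel)" "f_lt \<in> borel_measurable (borel \<Otimes>\<^sub>M borel)"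
    unfolding f_le_def f_lt_def by measurable
  have int: "integrable (std_gamma_pair a) f_le" "integrable (std_gamma_pair a) f_lt"
    "integrable (std_gamma_pair a) (\<lambda>y. f_lt (snd y, fst y))"
    by (auto intro!: integrable_std_gamma_pair_if_ln_bounded[OF a] simp: f_le_def f_lt_def)
  have "residual_mean a 1 1 = (\<integral>y. f_le y + f_lt (snd y, fst y) \<partial>std_gamma_pair a)"
    unfolding residual_mean_def
    by (intro Bochner_Integration.integral_cong) (auto simp: log_min_residual_def f_le_def f_lt_def)
  also have "\<dots> = integral\<^sup>L (std_gamma_pair a) f_le + integral\<^sup>L (std_gamma_pair a) f_lt"
    using int integral_product_swap[of f_lt] by (simp add: split_beta')
  also have "\<dots> = (\<integral>y. f_le y + f_lt y \<partial>std_gamma_pair a)"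
    using int by (simp add: Bochner_Integration.integral_add)
  also have "\<dots> = (\<integral>x. (\<integral>y. f_le (x, y) + f_lt (x, y) \<partial>std_gamma a) \<partial>std_gamma a)"
    using int integral_fst'[of "\<lambda>y. f_le y + f_lt y"] by simp
  also have "\<dots> = (\<integral>x. 2 * (ln x * (1 - G_std a x)) \<partial>std_gamma a)"
  proof (intro Bochner_Integration.integral_cong refl)
    fix x :: real
    have "(\<integral>y. f_le (x, y) + f_lt (x, y) \<partial>std_gamma a)
        = (\<integral>y. ln x * indicator {x..} y + ln x * indicator {x<..} y \<partial>std_gamma a)"
      by (intro Bochner_Integration.integral_cong) (auto simp: f_le_def f_lt_def indicator_def)
    also have "\<dots> = ln x * measure (std_gamma a) {x..} + ln x * measure (std_gamma a) {x<..}"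
      by (subst Bochner_Integration.integral_add) (auto simp: integrable_indicator_iff M1.emeasure_finite less_top[symmetric])
    finally show "(\<integral>y. f_le (x, y) + f_lt (x, y) \<partial>std_gamma a) = 2 * (ln x * (1 - G_std a x))"
      by (simp add: measure_std_gamma_atLeast[OF a] measure_std_gamma_greaterThan[OF a])
  qed
  also have "\<dots> = c3 a"
    using borel_measurable_G_std[OF a]
    by (simp add: integral_std_gamma[OF a] c3_def set_lebesgue_integral_def)
      (auto intro!: Bochner_Integration.integral_cong
        simp: indicator_def g_std_eq_gamma_kernel gamma_kernel_def)
  finally show ?thesis .
qed

lemma c3_le_Digamma: "a > 0 \<Longrightarrow> c3 a \<le> Digamma a"
  using residual_mean_le_Digamma[of a 1 1] residual_mean_one_one_eq_c3[of a] by simp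

section \<open>Admissibility within \<open>\<M>\<^sub>1\<close>\<close>

lemma inadmissible_if_dominated_by_d_est: "dominates a (d_est c') d \<Longrightarrow> inadmissible a d"
  unfolding inadmissible_def
proof (intro exI conjI)
  show "(\<lambda>x. d_est c' (fst x) (snd x)) \<in> borel_measurable (lborel \<Otimes>\<^sub>M lborel)"
    unfolding d_est_def by measurable
qed

lemma dominates_d_est_if_closer:
  assumes a: "a > 0"
    and closer: "\<And>th1 th2. th1 > 0 \<Longrightarrow> th2 > 0 \<Longrightarrow>
      \<bar>c' - residual_mean a th1 th2\<bar> < \<bar>c - residual_mean a th1 th2\<bar>"
  shows "dominates a (d_est c') (d_est c)"
  unfolding dominates_def
  using closer
  by (auto simp: risk_d_est_le_iff[OF a] risk_d_est_less_iff[OF a] less_imp_le intro!: exI[of _ 1])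

lemma dominates_d_est_above_Digamma:
  assumes "a > 0" "c > Digamma a"
  shows "dominates a (d_est (Digamma a)) (d_est c)"
  using assms residual_mean_le_Digamma[OF assms(1)] by (intro dominates_d_est_if_closer) force+

lemma dominates_d_est_below_c3:
  assumes "a > 0" "c < c3 a"
  shows "dominates a (d_est (c3 a)) (d_est c)"
  using assms residual_mean_one_one_le[OF assms(1)] residual_mean_one_one_eq_c3[OF assms(1)]
  by (intro dominates_d_est_if_closer) force+

text \<open>
  A competitor \<open>c' > c\<close> loses at \<open>\<theta>\<^sub>1 = \<theta>\<^sub>2\<close>, where the residual mean is \<open>c\<^sub>3(\<alpha>) \<le> c\<close>;
  a competitor \<open>c' < c\<close> loses once the residual mean exceeds \<open>(c + c')/2\<close>.
\<close>

lemma admissible_M1_between_c3_Digamma: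
  assumes a: "a > 0" and "c3 a \<le> c" "c \<le> Digamma a"
  shows "admissible_M1 a c"
  unfolding admissible_M1_def
proof
  assume "\<exists>c'. dominates a (d_est c') (d_est c)"
  then obtain c' where dom: "dominates a (d_est c') (d_est c)"
    by blast
  then have c'_closer: "\<bar>c' - residual_mean a th1 th2\<bar> \<le> \<bar>c - residual_mean a th1 th2\<bar>"
    if "th1 > 0" "th2 > 0" for th1 th2
    using that by (auto simp: dominates_def risk_d_est_le_iff[OF a])
  have "c' \<noteq> c"
    using dom by (auto simp: dominates_def)
  then consider "c < c'" | "c' < c"
    by linarith
  then show False
  proof cases
    case 1
    then show False
      using c'_closer[of 1 1] residual_mean_one_one_eq_c3[OF a] assms by auto
  next
    case 2
    have "\<forall>\<^sub>F n in sequentially. (c + c') / 2 < residual_mean a 1 (real n + 1)"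
      using residual_mean_tendsto_Digamma[OF a] 2 assms by (intro order_tendstoD(1)) auto
    then obtain n where "(c + c') / 2 < residual_mean a 1 (real n + 1)"
      by (auto simp: eventually_sequentially)
    then show False
      using c'_closer[of 1 "real n + 1"] 2 by auto
  qed
qed

section \<open>The digamma function on the positive reals\<close>

lemma Digamma_inv_Digamma:
  assumes "x > 0"
  shows "Digamma_inv (Digamma x) = x"
  unfolding Digamma_inv_def
proof (rule the_equality)
  show "\<And>y. y > 0 \<and> Digamma y = Digamma x \<Longrightarrow> y = x"
    using assms Digamma_real_strict_mono by (metis linorder_neqE_linordered_idom less_irrefl)
qed (use assms in auto)

text \<open>\<open>\<psi>(x) = \<psi>(x + 1) - 1/x \<rightarrow> -\<infinity>\<close> as \<open>x \<rightarrow> 0\<^sup>+\<close>, so by continuity \<open>\<psi>\<close> takes every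
  value below \<open>\<psi>(a)\<close> on \<open>(0, a]\<close>.\<close>

lemma Digamma_attains_le:
  fixes a c :: real
  assumes a: "a > 0" and c: "c \<le> Digamma a"
  obtains x where "0 < x" "x \<le> a" "Digamma x = c"
proof -
  define x0 where "x0 = min a (min 1 (1 / (\<bar>Digamma 2\<bar> + \<bar>c\<bar> + 1)))"
  have "x0 \<le> 1"
    unfolding x0_def by (rule order.trans[OF min.cobounded2 min.cobounded1])
  then have x0: "0 < x0" "x0 \<le> a" "x0 \<le> 1"
    using a by (auto simp: x0_def)
  have "x0 \<le> 1 / (\<bar>Digamma 2\<bar> + \<bar>c\<bar> + 1)"
    by (simp add: x0_def)
  then have "\<bar>Digamma 2\<bar> + \<bar>c\<bar> + 1 \<le> 1 / x0"
    using x0(1) by (simp add: field_simps)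
  moreover have "Digamma x0 = Digamma (x0 + 1) - 1 / x0"
    using x0 Digamma_plus1[of x0] by simp
  moreover have "Digamma (x0 + 1) \<le> Digamma 2"
    using x0 by (intro Digamma_real_mono) auto
  ultimately have "Digamma x0 \<le> c"
    by linarith
  moreover have "continuous_on {x0..a} (Digamma :: real \<Rightarrow> real)"
    using x0 by (intro continuous_on_Polygamma) auto
  ultimately obtain x where "x0 \<le> x" "x \<le> a" "Digamma x = c"
    using IVT'[of Digamma x0 c a] c x0(2) by auto
  then show ?thesis
    by (metis that x0(1) order.strict_trans2)
qed

theorem corollary3p1:
  fixes \<alpha> :: real
  assumes "\<alpha> > 0"
  shows "admissible_M1 \<alpha> (Digamma \<alpha>)
    \<and> inadmissible \<alpha> (d_est (ln \<alpha>)) \<and> dominates \<alpha> (d_est (Digamma \<alpha>)) (d_est (ln \<alpha>))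
    \<and> inadmissible \<alpha> (d_est (ln (\<alpha> + 1))) \<and> dominates \<alpha> (d_est (Digamma \<alpha>)) (d_est (ln (\<alpha> + 1)))
    \<and> (\<forall>\<beta>. beta1 \<alpha> \<le> \<beta> \<and> \<beta> \<le> 0 \<longrightarrow> admissible_M1 \<alpha> (Digamma (\<alpha> + \<beta>)))
    \<and> (\<forall>\<beta>. -\<alpha> < \<beta> \<and> \<beta> < beta1 \<alpha> \<longrightarrow>
          inadmissible \<alpha> (d_est (Digamma (\<alpha> + \<beta>)))
          \<and> dominates \<alpha> (d_est (c3 \<alpha>)) (d_est (Digamma (\<alpha> + \<beta>))))
    \<and> (\<forall>\<beta>. \<beta> > 0 \<longrightarrow>
          inadmissible \<alpha> (d_est (Digamma (\<alpha> + \<beta>)))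
          \<and> dominates \<alpha> (d_est (Digamma \<alpha>)) (d_est (Digamma (\<alpha> + \<beta>))))"
proof -
  note a = assms
  obtain x0 where x0: "0 < x0" "x0 \<le> \<alpha>" "Digamma x0 = c3 \<alpha>"
    using Digamma_attains_le[OF a c3_le_Digamma[OF a]] by blast
  have beta1: "beta1 \<alpha> = x0 - \<alpha>"
    using Digamma_inv_Digamma[OF x0(1)] x0(3) by (simp add: beta1_def)
  have "ln \<alpha> < ln (\<alpha> + 1)"
    using a by (subst ln_less_cancel_iff) auto
  then have ln_dominated: "dominates \<alpha> (d_est (Digamma \<alpha>)) (d_est (ln \<alpha>))"
    "dominates \<alpha> (d_est (Digamma \<alpha>)) (d_est (ln (\<alpha> + 1)))"
    using Digamma_less_ln[OF a] by (auto intro: dominates_d_est_above_Digamma[OF a])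
  have admissible: "admissible_M1 \<alpha> (Digamma (\<alpha> + \<beta>))" if "beta1 \<alpha> \<le> \<beta>" "\<beta> \<le> 0" for \<beta>
    using that x0 beta1
    by (intro admissible_M1_between_c3_Digamma[OF a]) (auto simp flip: x0(3) intro!: Digamma_real_mono)
  have below: "dominates \<alpha> (d_est (c3 \<alpha>)) (d_est (Digamma (\<alpha> + \<beta>)))"
    if "-\<alpha> < \<beta>" "\<beta> < beta1 \<alpha>" for \<beta>
    using that x0 beta1 Digamma_real_strict_mono[of "\<alpha> + \<beta>" x0]
    by (intro dominates_d_est_below_c3[OF a]) auto
  have above: "dominates \<alpha> (d_est (Digamma \<alpha>)) (d_est (Digamma (\<alpha> + \<beta>)))" if "\<beta> > 0" for \<beta>
    using that a by (intro dominates_d_est_above_Digamma[OF a] Digamma_real_strict_mono) auto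
  have "admissible_M1 \<alpha> (Digamma \<alpha>)"
    using admissible[of 0] beta1 x0 by simp
  then show ?thesis
    using admissible below above ln_dominated by (blast intro: inadmissible_if_dominated_by_d_est)
qed

end
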